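(* Let $c_v>\frac12$, let $\varrho_\pm,p_\pm>0$, $v_\pm\in\mathbb{R}$ be Riemann data (for the one-dimensional full Euler system in the variable $x_2$, with states $(\varrho_-,v_-,p_-)$ for $x_2<0$ and $(\varrho_+,v_+,p_+)$ for $x_2>0$) whose 1D Riemann solution consists of a 1-shock, possibly a 2-contact discontinuity, and a 3-shock, with intermediate states $(\varrho_{M-},v_M,p_M)$, $(\varrho_{M+},v_M,p_M)$ and shock speeds $\sigma_-,\sigma_+$, and assume $v_M=0$. Define for $\varepsilon\in\mathbb{R}$ $A(\varepsilon)=\varrho_-(\varrho_{M-}+\varepsilon)(\varrho_{M+}-\varepsilon-\varrho_+)-\varrho_+(\varrho_{M+}-\varepsilon)(\varrho_{M-}+\varepsilon-\varrho_-)$, $B(\varepsilon)=\varrho_-\varrho_+(\varrho_{M-}+\varepsilon)(\varrho_{M+}-\varepsilon)(v_--v_+)^2-(p_--p_+)A(\varepsilon)$, $D(\varepsilon)=v_-\varrho_-(\varrho_{M-}+\varepsilon)(\varrho_{M+}-\varepsilon-\varrho_+)-v_+\varrho_+(\varrho_{M+}-\varepsilon)(\varrho_{M-}+\varepsilon-\varrho_-)$, let $\varepsilon_{\max}>0$ be such that $A(\varepsilon)\ne0$, $B(\varepsilon)>0$, $\varrho_{M+}-\varepsilon-\varrho_+>0$ and $\varrho_{M-}+\varepsilon-\varrho_->0$ for all $\varepsilon\in(0,\varepsilon_{\max}]$, and for $\varepsilon\in(0,\varepsilon_{\max}]$ define $\mu_0(\varepsilon)=\frac{1}{A(\varepsilon)}\Big[D(\varepsilon)+\varrho_-\varrho_+(\varrho_{M+}-\varepsilon)(v_--v_+)-\sqrt{(\varrho_{M-}+\varepsilon)^2\frac{\varrho_{M+}-\varepsilon-\varrho_+}{\varrho_{M-}+\varepsilon-\varrho_-}B(\varepsilon)}\Big]$,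 $\mu_1(\varepsilon)=\frac{1}{A(\varepsilon)}\Big[D(\varepsilon)-\sqrt{(\varrho_{M-}+\varepsilon-\varrho_-)(\varrho_{M+}-\varepsilon-\varrho_+)B(\varepsilon)}\Big]$, $\mu_2(\varepsilon)=\frac{1}{A(\varepsilon)}\Big[D(\varepsilon)+\varrho_-\varrho_+(\varrho_{M-}+\varepsilon)(v_--v_+)-\sqrt{(\varrho_{M+}-\varepsilon)^2\frac{\varrho_{M-}+\varepsilon-\varrho_-}{\varrho_{M+}-\varepsilon-\varrho_+}B(\varepsilon)}\Big]$. Then $\lim_{\varepsilon\to0}\mu_0(\varepsilon)=\sigma_-$, $\lim_{\varepsilon\to0}\mu_1(\varepsilon)=v_M$ and $\lim_{\varepsilon\to0}\mu_2(\varepsilon)=\sigma_+$.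
   Context: The one-dimensional full Euler system for an ideal gas is $\partial_t\varrho+\partial_2(\varrho v)=0$, $\partial_t(\varrho v)+\partial_2(\varrho v^2+p)=0$, $\partial_t(\frac12\varrho v^2+c_vp)+\partial_2[(\frac12\varrho v^2+(c_v+1)p)v]=0$. The 1D Riemann solution is its unique self-similar BV solution with the given Riemann data, consisting of a 1-wave, a (possibly absent) 2-contact discontinuity traveling with speed $v_M$, and a 3-wave, separated by constant states. In the case considered the 1-wave is an admissible shock connecting $(\varrho_-,v_-,p_-)$ to $(\varrho_{M-},v_M,p_M)$ with speed $\sigma_-$, and the 3-wave an admissible shock connecting $(\varrho_{M+},v_M,p_M)$ to $(\varrho_+,v_+,p_+)$ with speed $\sigma_+$; the Rankine–Hugoniot conditions hold, in particular $\sigma_\pm(\varrho_\pm-\varrho_{M\pm})=\varrho_\pm v_\pm-\varrho_{M\pm}v_M$. It is known that $p_M>\max\{p_-,p_+\}$, $\varrho_{M\pm}>\varrho_\pm$. The paper shows such an $\varepsilon_{\max}$ exists. *)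

theory Defs
  imports Complex_Main
begin

definition energy :: "real \<Rightarrow> real \<Rightarrow> real \<Rightarrow> real \<Rightarrow> real" where
  "energy cv rho v p = rho * v^2 / 2 + cv * p"

text \<open>Sound speed, with adiabatic exponent gamma = (c_v + 1)/c_v.\<close>
definition sound_speed :: "real \<Rightarrow> real \<Rightarrow> real \<Rightarrow> real" where
  "sound_speed cv rho p = sqrt (((cv + 1) / cv) * p / rho)"

definition RH :: "real \<Rightarrow> real \<Rightarrow> real \<Rightarrow> real \<Rightarrow> real \<Rightarrow> real \<Rightarrow> real \<Rightarrow> real \<Rightarrow> bool" where
  "RH cv s rL vL pL rR vR pR \<longleftrightarrow>
     s * (rL - rR) = rL * vL - rR * vR \<and>
     s * (rL * vL - rR * vR) = (rL * vL^2 + pL) - (rR * vR^2 + pR) \<and>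
     s * (energy cv rL vL pL - energy cv rR vR pR)
       = (energy cv rL vL pL + pL) * vL - (energy cv rR vR pR + pR) * vR"

definition adm_1shock :: "real \<Rightarrow> real \<Rightarrow> real \<Rightarrow> real \<Rightarrow> real \<Rightarrow> real \<Rightarrow> real \<Rightarrow> real \<Rightarrow> bool" where
  "adm_1shock cv s rL vL pL rR vR pR \<longleftrightarrow> RH cv s rL vL pL rR vR pR \<and>
     vR - sound_speed cv rR pR < s \<and> s < vL - sound_speed cv rL pL"

definition adm_3shock :: "real \<Rightarrow> real \<Rightarrow> real \<Rightarrow> real \<Rightarrow> real \<Rightarrow> real \<Rightarrow> real \<Rightarrow> real \<Rightarrow> bool" where
  "adm_3shock cv s rL vL pL rR vR pR \<longleftrightarrow> RH cv s rL vL pL rR vR pR \<and>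
     vR + sound_speed cv rR pR < s \<and> s < vL + sound_speed cv rL pL"

definition Afun :: "real \<Rightarrow> real \<Rightarrow> real \<Rightarrow> real \<Rightarrow> real \<Rightarrow> real" where
  "Afun rm rp rMm rMp e =
     rm * (rMm + e) * (rMp - e - rp) - rp * (rMp - e) * (rMm + e - rm)"

definition Bfun :: "real \<Rightarrow> real \<Rightarrow> real \<Rightarrow> real \<Rightarrow> real \<Rightarrow> real \<Rightarrow> real \<Rightarrow> real \<Rightarrow> real \<Rightarrow> real" where
  "Bfun rm vm pm rp vp pp rMm rMp e =
     rm * rp * (rMm + e) * (rMp - e) * (vm - vp)^2 - (pm - pp) * Afun rm rp rMm rMp e"

definition Dfun :: "real \<Rightarrow> real \<Rightarrow> real \<Rightarrow> real \<Rightarrow> real \<Rightarrow> real \<Rightarrow> real \<Rightarrow> real" where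
  "Dfun rm vm rp vp rMm rMp e =
     vm * rm * (rMm + e) * (rMp - e - rp) - vp * rp * (rMp - e) * (rMm + e - rm)"

definition mu0 :: "real \<Rightarrow> real \<Rightarrow> real \<Rightarrow> real \<Rightarrow> real \<Rightarrow> real \<Rightarrow> real \<Rightarrow> real \<Rightarrow> real \<Rightarrow> real" where
  "mu0 rm vm pm rp vp pp rMm rMp e =
     (Dfun rm vm rp vp rMm rMp e + rm * rp * (rMp - e) * (vm - vp)
      - sqrt ((rMm + e)^2 * ((rMp - e - rp) / (rMm + e - rm)) * Bfun rm vm pm rp vp pp rMm rMp e))
     / Afun rm rp rMm rMp e"

definition mu1 :: "real \<Rightarrow> real \<Rightarrow> real \<Rightarrow> real \<Rightarrow> real \<Rightarrow> real \<Rightarrow> real \<Rightarrow> real \<Rightarrow> real \<Rightarrow> real" where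
  "mu1 rm vm pm rp vp pp rMm rMp e =
     (Dfun rm vm rp vp rMm rMp e
      - sqrt ((rMm + e - rm) * (rMp - e - rp) * Bfun rm vm pm rp vp pp rMm rMp e))
     / Afun rm rp rMm rMp e"

definition mu2 :: "real \<Rightarrow> real \<Rightarrow> real \<Rightarrow> real \<Rightarrow> real \<Rightarrow> real \<Rightarrow> real \<Rightarrow> real \<Rightarrow> real \<Rightarrow> real" where
  "mu2 rm vm pm rp vp pp rMm rMp e =
     (Dfun rm vm rp vp rMm rMp e + rm * rp * (rMm + e) * (vm - vp)
      - sqrt ((rMp - e)^2 * ((rMm + e - rm) / (rMp - e - rp)) * Bfun rm vm pm rp vp pp rMm rMp e))
     / Afun rm rp rMm rMp e"

end

theory Submission
  imports Defs
begin

(* Each mu_i(e) is the root (N_i - sqrt (N_i^2 - A Q_i)) / A of a quadratic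
   A mu^2 - 2 N_i mu + Q_i whose coefficients are continuous at e = 0: the radicands in the
   definitions of mu_i are exactly the discriminants N_i^2 - A Q_i.  Rationalised, the root is
   Q_i / (N_i + sqrt (N_i^2 - A Q_i)), which depends continuously on the coefficients as long as
   N_i > 0, even where A vanishes (and A(0) may well vanish).  Hence mu_i tends to the root x of
   the limiting quadratic with N_i(0) - A(0) x > 0.  For v_M = 0 the Rankine-Hugoniot conditions
   express v_-, p_-, v_+, p_+ through sigma_- and sigma_+, and then sigma_-, 0 and sigma_+ turn
   out to be these roots for i = 0, 1, 2. *)

lemma tendsto_quadratic_root:
  fixes A N Q :: "'a \<Rightarrow> real"
  assumes A: "(A \<longlongrightarrow> a) F" and N: "(N \<longlongrightarrow> n) F" and Q: "(Q \<longlongrightarrow> q) F"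
    and ev: "\<forall>\<^sub>F t in F. A t \<noteq> 0 \<and> N t ^ 2 - A t * Q t \<ge> 0"
    and root: "a * x^2 - 2 * n * x + q = 0" and pos: "n - a * x > 0" "n > 0"
  shows "((\<lambda>t. (N t - sqrt (N t ^ 2 - A t * Q t)) / A t) \<longlongrightarrow> x) F"
proof -
  have q: "q = x * (2 * n - a * x)"
    using root by (simp add: power2_eq_square algebra_simps)
  have "((\<lambda>t. N t ^ 2 - A t * Q t) \<longlongrightarrow> n^2 - a * q) F"
    by (intro tendsto_intros A N Q)
  also have "n^2 - a * q = (n - a * x)^2"
    unfolding q by (simp add: power2_eq_square algebra_simps)
  finally have "((\<lambda>t. sqrt (N t ^ 2 - A t * Q t)) \<longlongrightarrow> n - a * x) F"
    using tendsto_real_sqrt pos(1) by fastforce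
  then have conj: "((\<lambda>t. N t + sqrt (N t ^ 2 - A t * Q t)) \<longlongrightarrow> 2 * n - a * x) F"
    using tendsto_add[OF N] by fastforce
  have "((\<lambda>t. Q t / (N t + sqrt (N t ^ 2 - A t * Q t))) \<longlongrightarrow> x) F"
    using tendsto_divide[OF Q conj] pos q by simp
  moreover have "\<forall>\<^sub>F t in F. N t + sqrt (N t ^ 2 - A t * Q t) > 0"
    using order_tendstoD(1)[OF conj] pos by simp
  with ev have "\<forall>\<^sub>F t in F.
      Q t / (N t + sqrt (N t ^ 2 - A t * Q t)) = (N t - sqrt (N t ^ 2 - A t * Q t)) / A t"
  proof eventually_elim
    case (elim t)
    then have "(N t - sqrt (N t ^ 2 - A t * Q t)) * (N t + sqrt (N t ^ 2 - A t * Q t)) = Q t * A t"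
      by (simp add: algebra_simps flip: power2_eq_square)
    with elim show ?case
      by (simp add: frac_eq_eq)
  qed
  ultimately show ?thesis
    by (rule Lim_transform_eventually)
qed

lemma sound_speed_nonneg:
  assumes "cv > 0" "rho > 0" "p > 0"
  shows "sound_speed cv rho p \<ge> 0"
  using assms unfolding sound_speed_def by simp

lemma adm_1shock_into_rest:
  assumes shock: "adm_1shock cv s rL vL pL rR 0 pR"
    and "cv > 0" "rL > 0" "pL > 0" "rR > 0"
  shows "s < 0" "vL = s * (rL - rR) / rL" "pL = pR - s^2 * rR * (rR - rL) / rL"
proof -
  from shock have mass: "s * (rL - rR) = rL * vL"
    and momentum: "s * (rL * vL) = rL * vL^2 + pL - pR"
    and "s < vL - sound_speed cv rL pL"
    unfolding adm_1shock_def RH_def by auto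
  moreover have "sound_speed cv rL pL \<ge> 0"
    using assms(2-4) by (rule sound_speed_nonneg)
  ultimately have "rL * s < rL * vL"
    using \<open>rL > 0\<close> by simp
  with mass have "s * rR < 0"
    by (simp add: algebra_simps)
  with \<open>rR > 0\<close> show "s < 0"
    by (simp add: mult_less_0_iff)
  show vL: "vL = s * (rL - rR) / rL"
    using mass \<open>rL > 0\<close> by (simp add: field_simps)
  have "pL = pR + rL * vL * (s - vL)"
    using momentum by (simp add: algebra_simps power2_eq_square)
  also have "\<dots> = pR - s^2 * rR * (rR - rL) / rL"
    using \<open>rL > 0\<close> unfolding vL by (simp add: field_simps power2_eq_square)
  finally show "pL = pR - s^2 * rR * (rR - rL) / rL" .
qed

lemma adm_3shock_from_rest:
  assumes shock: "adm_3shock cv s rL 0 pL rR vR pR"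
    and "cv > 0" "rR > 0" "pR > 0" "rL > 0"
  shows "s > 0" "vR = s * (rR - rL) / rR" "pR = pL - s^2 * rL * (rL - rR) / rR"
proof -
  from shock have mass: "s * (rL - rR) = - rR * vR"
    and momentum: "s * (- rR * vR) = pL - (rR * vR^2 + pR)"
    and "vR + sound_speed cv rR pR < s"
    unfolding adm_3shock_def RH_def by auto
  moreover have "sound_speed cv rR pR \<ge> 0"
    using assms(2-4) by (rule sound_speed_nonneg)
  ultimately have "rR * vR < rR * s"
    using \<open>rR > 0\<close> by simp
  with mass have "s * rL > 0"
    by (simp add: algebra_simps)
  with \<open>rL > 0\<close> show "s > 0"
    by (simp add: zero_less_mult_iff)
  show vR: "vR = s * (rR - rL) / rR"
    using mass \<open>rR > 0\<close> by (simp add: field_simps)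
  have "pR = pL + rR * vR * (s - vR)"
    using momentum by (simp add: algebra_simps power2_eq_square)
  also have "\<dots> = pL - s^2 * rL * (rL - rR) / rR"
    using \<open>rR > 0\<close> unfolding vR by (simp add: field_simps power2_eq_square)
  finally show "pR = pL - s^2 * rL * (rL - rR) / rR" .
qed

(* With N_0 = D + rho_- rho_+ (rho_M+ - e) (v_- - v_+), N_1 = D and
   N_2 = D + rho_- rho_+ (rho_M- + e) (v_- - v_+), these are the constant coefficients Q_i
   for which N_i^2 - A Q_i is the radicand of mu_i. *)
definition Q0fun ::
    "real \<Rightarrow> real \<Rightarrow> real \<Rightarrow> real \<Rightarrow> real \<Rightarrow> real \<Rightarrow> real \<Rightarrow> real \<Rightarrow> real
      \<Rightarrow> real" where
  "Q0fun rm vm pm rp vp pp rMm rMp e =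
     vm^2 * Afun rm rp rMm rMp e + 2 * vm * rp * (rMm + e) * (rMp - e) * (vm - vp)
     + (rMm + e)^2 * ((rMp - e - rp) * (pm - pp) - rp * (rMp - e) * (vm - vp)^2) / (rMm + e - rm)"

definition Q1fun ::
    "real \<Rightarrow> real \<Rightarrow> real \<Rightarrow> real \<Rightarrow> real \<Rightarrow> real \<Rightarrow> real \<Rightarrow> real \<Rightarrow> real
      \<Rightarrow> real" where
  "Q1fun rm vm pm rp vp pp rMm rMp e =
     vm^2 * rm * (rMm + e) * (rMp - e - rp) - vp^2 * rp * (rMp - e) * (rMm + e - rm)
     + (rMm + e - rm) * (rMp - e - rp) * (pm - pp)"

definition Q2fun ::
    "real \<Rightarrow> real \<Rightarrow> real \<Rightarrow> real \<Rightarrow> real \<Rightarrow> real \<Rightarrow> real \<Rightarrow> real \<Rightarrow> real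
      \<Rightarrow> real" where
  "Q2fun rm vm pm rp vp pp rMm rMp e =
     vp^2 * Afun rm rp rMm rMp e + 2 * vp * rm * (rMm + e) * (rMp - e) * (vm - vp)
     + (rMp - e)^2 * ((rMm + e - rm) * (pm - pp) + rm * (rMm + e) * (vm - vp)^2) / (rMp - e - rp)"

lemma mu0_discriminant:
  assumes "rMm + e - rm \<noteq> 0"
  shows "(rMm + e)^2 * ((rMp - e - rp) / (rMm + e - rm)) * Bfun rm vm pm rp vp pp rMm rMp e
     = (Dfun rm vm rp vp rMm rMp e + rm * rp * (rMp - e) * (vm - vp))^2
       - Afun rm rp rMm rMp e * Q0fun rm vm pm rp vp pp rMm rMp e"
proof -
  define a b where "a = rMm + e" and "b = rMp - e"
  have "(a - rm) * Q0fun rm vm pm rp vp pp rMm rMp e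
      = (a - rm) * (vm^2 * Afun rm rp rMm rMp e + 2 * vm * rp * a * b * (vm - vp))
        + a^2 * ((b - rp) * (pm - pp) - rp * b * (vm - vp)^2)"
    using assms unfolding Q0fun_def a_def[symmetric] b_def[symmetric]
    by (simp add: distrib_left)
  then have "(a - rm) * ((Dfun rm vm rp vp rMm rMp e + rm * rp * b * (vm - vp))^2
        - Afun rm rp rMm rMp e * Q0fun rm vm pm rp vp pp rMm rMp e)
      = a^2 * (b - rp) * Bfun rm vm pm rp vp pp rMm rMp e"
    unfolding Afun_def Bfun_def Dfun_def a_def[symmetric] b_def[symmetric]
    by (simp add: right_diff_distrib) algebra
  then show ?thesis
    using assms unfolding a_def b_def by (simp add: field_simps)
qed

lemma mu1_discriminant:
  "(rMm + e - rm) * (rMp - e - rp) * Bfun rm vm pm rp vp pp rMm rMp e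
     = (Dfun rm vm rp vp rMm rMp e)^2 - Afun rm rp rMm rMp e * Q1fun rm vm pm rp vp pp rMm rMp e"
  unfolding Afun_def Bfun_def Dfun_def Q1fun_def by algebra

lemma mu2_discriminant:
  assumes "rMp - e - rp \<noteq> 0"
  shows "(rMp - e)^2 * ((rMm + e - rm) / (rMp - e - rp)) * Bfun rm vm pm rp vp pp rMm rMp e
     = (Dfun rm vm rp vp rMm rMp e + rm * rp * (rMm + e) * (vm - vp))^2
       - Afun rm rp rMm rMp e * Q2fun rm vm pm rp vp pp rMm rMp e"
proof -
  define a b where "a = rMm + e" and "b = rMp - e"
  have "(b - rp) * Q2fun rm vm pm rp vp pp rMm rMp e
      = (b - rp) * (vp^2 * Afun rm rp rMm rMp e + 2 * vp * rm * a * b * (vm - vp))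
        + b^2 * ((a - rm) * (pm - pp) + rm * a * (vm - vp)^2)"
    using assms unfolding Q2fun_def a_def[symmetric] b_def[symmetric]
    by (simp add: distrib_left add_divide_distrib)
  then have "(b - rp) * ((Dfun rm vm rp vp rMm rMp e + rm * rp * a * (vm - vp))^2
        - Afun rm rp rMm rMp e * Q2fun rm vm pm rp vp pp rMm rMp e)
      = b^2 * (a - rm) * Bfun rm vm pm rp vp pp rMm rMp e"
    unfolding Afun_def Bfun_def Dfun_def a_def[symmetric] b_def[symmetric]
    by (simp add: right_diff_distrib) algebra
  then show ?thesis
    using assms unfolding a_def b_def by (simp add: field_simps)
qed

(* The Rankine-Hugoniot conditions of the two shocks, solved for the outer states when v_M = 0. *)
locale double_shock_at_rest =
  fixes rm vm pm rp vp pp rMm rMp pM sm sp :: real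
  assumes densities: "0 < rm" "rm < rMm" "0 < rp" "rp < rMp"
    and speeds: "sm < 0" "0 < sp"
    and left_state: "vm = sm * (rm - rMm) / rm" "pm = pM - sm^2 * rMm * (rMm - rm) / rm"
    and right_state: "vp = sp * (rp - rMp) / rp" "pp = pM - sp^2 * rMp * (rMp - rp) / rp"
begin

lemma velocities: "vp < 0" "0 < vm"
  using densities speeds unfolding left_state right_state
  by (auto intro!: divide_neg_pos divide_pos_pos mult_pos_neg mult_neg_neg)

lemma shock_speeds_gap: "sm * rMm < sp * rMp"
  using densities speeds by (smt (verit) mult_neg_pos mult_pos_pos)

lemma Dfun_at_0: "Dfun rm vm rp vp rMm rMp 0 = (rMm - rm) * (rMp - rp) * (sp * rMp - sm * rMm)"
  using densities unfolding Dfun_def left_state right_state by (simp add: field_simps)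

lemma Dfun_at_0_pos: "Dfun rm vm rp vp rMm rMp 0 > 0"
  unfolding Dfun_at_0 using densities shock_speeds_gap by simp

lemma Q1fun_at_0: "Q1fun rm vm pm rp vp pp rMm rMp 0 = 0"
  using densities unfolding Q1fun_def left_state right_state by (simp add: field_simps) algebra

lemma mu0_quadratic_at_0:
  "Dfun rm vm rp vp rMm rMp 0 + rm * rp * rMp * (vm - vp) - Afun rm rp rMm rMp 0 * sm
     = rMm * (rMp - rp) * (sp * rMp - sm * rMm)"
  "Afun rm rp rMm rMp 0 * sm^2 - 2 * (Dfun rm vm rp vp rMm rMp 0 + rm * rp * rMp * (vm - vp)) * sm
     + Q0fun rm vm pm rp vp pp rMm rMp 0 = 0"
  using densities unfolding Afun_def Dfun_def Q0fun_def left_state right_state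
  by (simp_all add: field_simps) algebra+

lemma mu2_quadratic_at_0:
  "Dfun rm vm rp vp rMm rMp 0 + rm * rp * rMm * (vm - vp) - Afun rm rp rMm rMp 0 * sp
     = rMp * (rMm - rm) * (sp * rMp - sm * rMm)"
  "Afun rm rp rMm rMp 0 * sp^2 - 2 * (Dfun rm vm rp vp rMm rMp 0 + rm * rp * rMm * (vm - vp)) * sp
     + Q2fun rm vm pm rp vp pp rMm rMp 0 = 0"
  using densities unfolding Afun_def Dfun_def Q2fun_def left_state right_state
  by (simp_all add: field_simps) algebra+

context
  assumes eps: "\<forall>\<^sub>F e in at_right 0. Afun rm rp rMm rMp e \<noteq> 0 \<and>
    Bfun rm vm pm rp vp pp rMm rMp e > 0 \<and> rMp - e - rp > 0 \<and> rMm + e - rm > 0"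
begin

lemma tendsto_mu0:
  "((\<lambda>e. mu0 rm vm pm rp vp pp rMm rMp e) \<longlongrightarrow> sm) (at_right 0)"
proof -
  define N where "N e = Dfun rm vm rp vp rMm rMp e + rm * rp * (rMp - e) * (vm - vp)" for e
  have "((\<lambda>e. (N e - sqrt ((N e)^2 - Afun rm rp rMm rMp e * Q0fun rm vm pm rp vp pp rMm rMp e))
      / Afun rm rp rMm rMp e) \<longlongrightarrow> sm) (at_right 0)"
  proof (rule tendsto_quadratic_root)
    show "((\<lambda>e. Afun rm rp rMm rMp e) \<longlongrightarrow> Afun rm rp rMm rMp 0) (at_right 0)"
      unfolding Afun_def by (auto intro!: tendsto_eq_intros)
    show "(N \<longlongrightarrow> N 0) (at_right 0)"
      unfolding N_def Dfun_def by (auto intro!: tendsto_eq_intros)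
    show "((\<lambda>e. Q0fun rm vm pm rp vp pp rMm rMp e) \<longlongrightarrow> Q0fun rm vm pm rp vp pp rMm rMp 0) (at_right 0)"
      unfolding Q0fun_def Afun_def using densities by (auto intro!: tendsto_eq_intros)
    show "\<forall>\<^sub>F e in at_right 0. Afun rm rp rMm rMp e \<noteq> 0 \<and>
        (N e)^2 - Afun rm rp rMm rMp e * Q0fun rm vm pm rp vp pp rMm rMp e \<ge> 0"
      using eps by eventually_elim (simp add: N_def flip: mu0_discriminant)
    show "N 0 - Afun rm rp rMm rMp 0 * sm > 0"
      unfolding N_def using mu0_quadratic_at_0(1) densities shock_speeds_gap by simp
    show "N 0 > 0"
      unfolding N_def using Dfun_at_0_pos velocities densities by (simp add: add_pos_pos)
  qed (use mu0_quadratic_at_0(2) N_def in simp)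
  moreover have "\<forall>\<^sub>F e in at_right 0.
      (N e - sqrt ((N e)^2 - Afun rm rp rMm rMp e * Q0fun rm vm pm rp vp pp rMm rMp e))
        / Afun rm rp rMm rMp e = mu0 rm vm pm rp vp pp rMm rMp e"
    using eps
  proof eventually_elim
    case (elim e)
    then have "rMm + e - rm \<noteq> 0"
      by simp
    from mu0_discriminant[OF this] show ?case
      by (simp only: N_def mu0_def)
  qed
  ultimately show ?thesis
    by (rule Lim_transform_eventually)
qed

lemma tendsto_mu1:
  "((\<lambda>e. mu1 rm vm pm rp vp pp rMm rMp e) \<longlongrightarrow> 0) (at_right 0)"
proof -
  have "((\<lambda>e. (Dfun rm vm rp vp rMm rMp e - sqrt ((Dfun rm vm rp vp rMm rMp e)^2
      - Afun rm rp rMm rMp e * Q1fun rm vm pm rp vp pp rMm rMp e)) / Afun rm rp rMm rMp e)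
      \<longlongrightarrow> 0) (at_right 0)"
  proof (rule tendsto_quadratic_root)
    show "((\<lambda>e. Afun rm rp rMm rMp e) \<longlongrightarrow> Afun rm rp rMm rMp 0) (at_right 0)"
      unfolding Afun_def by (auto intro!: tendsto_eq_intros)
    show "((\<lambda>e. Dfun rm vm rp vp rMm rMp e) \<longlongrightarrow> Dfun rm vm rp vp rMm rMp 0) (at_right 0)"
      unfolding Dfun_def by (auto intro!: tendsto_eq_intros)
    show "((\<lambda>e. Q1fun rm vm pm rp vp pp rMm rMp e) \<longlongrightarrow> Q1fun rm vm pm rp vp pp rMm rMp 0) (at_right 0)"
      unfolding Q1fun_def by (auto intro!: tendsto_eq_intros)
    show "\<forall>\<^sub>F e in at_right 0. Afun rm rp rMm rMp e \<noteq> 0 \<and>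
        (Dfun rm vm rp vp rMm rMp e)^2 - Afun rm rp rMm rMp e * Q1fun rm vm pm rp vp pp rMm rMp e \<ge> 0"
      using eps by eventually_elim (simp flip: mu1_discriminant)
  qed (use Q1fun_at_0 Dfun_at_0_pos in auto)
  then show ?thesis
    unfolding mu1_def mu1_discriminant .
qed

lemma tendsto_mu2:
  "((\<lambda>e. mu2 rm vm pm rp vp pp rMm rMp e) \<longlongrightarrow> sp) (at_right 0)"
proof -
  define N where "N e = Dfun rm vm rp vp rMm rMp e + rm * rp * (rMm + e) * (vm - vp)" for e
  have "((\<lambda>e. (N e - sqrt ((N e)^2 - Afun rm rp rMm rMp e * Q2fun rm vm pm rp vp pp rMm rMp e))
      / Afun rm rp rMm rMp e) \<longlongrightarrow> sp) (at_right 0)"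
  proof (rule tendsto_quadratic_root)
    show "((\<lambda>e. Afun rm rp rMm rMp e) \<longlongrightarrow> Afun rm rp rMm rMp 0) (at_right 0)"
      unfolding Afun_def by (auto intro!: tendsto_eq_intros)
    show "(N \<longlongrightarrow> N 0) (at_right 0)"
      unfolding N_def Dfun_def by (auto intro!: tendsto_eq_intros)
    show "((\<lambda>e. Q2fun rm vm pm rp vp pp rMm rMp e) \<longlongrightarrow> Q2fun rm vm pm rp vp pp rMm rMp 0) (at_right 0)"
      unfolding Q2fun_def Afun_def using densities by (auto intro!: tendsto_eq_intros)
    show "\<forall>\<^sub>F e in at_right 0. Afun rm rp rMm rMp e \<noteq> 0 \<and>
        (N e)^2 - Afun rm rp rMm rMp e * Q2fun rm vm pm rp vp pp rMm rMp e \<ge> 0"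
      using eps by eventually_elim (simp add: N_def flip: mu2_discriminant)
    show "N 0 - Afun rm rp rMm rMp 0 * sp > 0"
      unfolding N_def using mu2_quadratic_at_0(1) densities shock_speeds_gap by simp
    show "N 0 > 0"
      unfolding N_def using Dfun_at_0_pos velocities densities by (simp add: add_pos_pos)
  qed (use mu2_quadratic_at_0(2) N_def in simp)
  moreover have "\<forall>\<^sub>F e in at_right 0.
      (N e - sqrt ((N e)^2 - Afun rm rp rMm rMp e * Q2fun rm vm pm rp vp pp rMm rMp e))
        / Afun rm rp rMm rMp e = mu2 rm vm pm rp vp pp rMm rMp e"
    using eps
  proof eventually_elim
    case (elim e)
    then have "rMp - e - rp \<noteq> 0"
      by simp
    from mu2_discriminant[OF this] show ?case
      by (simp only: N_def mu2_def)
  qed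
  ultimately show ?thesis
    by (rule Lim_transform_eventually)
qed

end

end

theorem proposition5p2:
  fixes cv rm vm pm rp vp pp rMm rMp vM pM sm sp emax :: real
  assumes cv: "cv > 1/2"
    and data: "rm > 0" "pm > 0" "rp > 0" "pp > 0"
    and shock1: "adm_1shock cv sm rm vm pm rMm vM pM"
    and shock3: "adm_3shock cv sp rMp vM pM rp vp pp"
    and known: "pM > max pm pp" "rMm > rm" "rMp > rp"
    and vM0: "vM = 0"
    and emax: "emax > 0"
    and eps: "\<And>e. e \<in> {0<..emax} \<Longrightarrow>
                 Afun rm rp rMm rMp e \<noteq> 0 \<and> Bfun rm vm pm rp vp pp rMm rMp e > 0 \<and>
                 rMp - e - rp > 0 \<and> rMm + e - rm > 0"
  shows "((\<lambda>e. mu0 rm vm pm rp vp pp rMm rMp e) \<longlongrightarrow> sm) (at_right 0) \<and>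
         ((\<lambda>e. mu1 rm vm pm rp vp pp rMm rMp e) \<longlongrightarrow> vM) (at_right 0) \<and>
         ((\<lambda>e. mu2 rm vm pm rp vp pp rMm rMp e) \<longlongrightarrow> sp) (at_right 0)"
proof -
  have "cv > 0" "rMm > 0" "rMp > 0"
    using cv data known by auto
  note left = adm_1shock_into_rest[OF shock1[unfolded vM0] \<open>cv > 0\<close> data(1,2) \<open>rMm > 0\<close>]
  note right = adm_3shock_from_rest[OF shock3[unfolded vM0] \<open>cv > 0\<close> data(3,4) \<open>rMp > 0\<close>]
  interpret double_shock_at_rest rm vm pm rp vp pp rMm rMp pM sm sp
    using data known left right by unfold_locales auto
  have "\<forall>\<^sub>F e in at_right 0. Afun rm rp rMm rMp e \<noteq> 0 \<and>
      Bfun rm vm pm rp vp pp rMm rMp e > 0 \<and> rMp - e - rp > 0 \<and> rMm + e - rm > 0"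
    unfolding eventually_at_right_field using emax eps by (intro exI[of _ emax]) auto
  then show ?thesis
    using tendsto_mu0 tendsto_mu1 tendsto_mu2 vM0 by simp
qed

end
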